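(* Let $\mathbf{A}$ and $\mathbf{B}$ be algebras in the same language and let $e$ be a unary term which is idempotent, separating and dense for both $\mathbf{A}$ and $\mathbf{B}$. Then $\mathbf{A}\cong\mathbf{B}$ if and only if $e(\mathbf{A})\cong e(\mathbf{B})$.
   Context: A unary term $e$ is idempotent for $\mathbf{A}$ if $\mathbf{A}\models e(e(x))=e(x)$. The localization $e(\mathbf{A})$ is the algebra with universe $e(A)$ whose fundamental operation symbols are the symbols $et$, one for each term $t$ in the language of $\mathbf{A}$, where $et$ is interpreted as the restriction to $e(A)$ of the term operation $e(t(x_1,\dots,x_n))$ of $\mathbf{A}$ (so $e(\mathbf{A})$ and $e(\mathbf{B})$ have the same similarity type). The term $e$ separates $\mathbf{A}$ if for all $a\neq b$ in $A$ there is a unary term $g$ with $e(g(a))\neq e(g(b))$. The term $e$ is dense for $\mathbf{A}$ if $\mathbf{A}$ is generated by $e(A)$. *)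

theory Defs
  imports Main
begin

datatype 'f trm = Var nat | App 'f "'f trm list"

fun wf_trm :: "('f \<Rightarrow> nat) \<Rightarrow> 'f trm \<Rightarrow> bool" where
  "wf_trm ar (Var i) = True"
| "wf_trm ar (App f ts) = (length ts = ar f \<and> (\<forall>t\<in>set ts. wf_trm ar t))"

fun vars :: "'f trm \<Rightarrow> nat set" where
  "vars (Var i) = {i}"
| "vars (App f ts) = (\<Union>t\<in>set ts. vars t)"

record ('f, 'a) algebra =
  carrier :: "'a set"
  ops :: "'f \<Rightarrow> 'a list \<Rightarrow> 'a"

fun eval :: "('f, 'a) algebra \<Rightarrow> (nat \<Rightarrow> 'a) \<Rightarrow> 'f trm \<Rightarrow> 'a" where
  "eval A env (Var i) = env i"
| "eval A env (App f ts) = ops A f (map (eval A env) ts)"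

definition is_algebra :: "'f set \<Rightarrow> ('f \<Rightarrow> nat) \<Rightarrow> ('f, 'a) algebra \<Rightarrow> bool" where
  "is_algebra Sym ar A \<longleftrightarrow>
     (\<forall>f\<in>Sym. \<forall>as. length as = ar f \<and> set as \<subseteq> carrier A \<longrightarrow> ops A f as \<in> carrier A)"

definition iso :: "'f set \<Rightarrow> ('f \<Rightarrow> nat) \<Rightarrow> ('f, 'a) algebra \<Rightarrow> ('f, 'b) algebra \<Rightarrow> bool" where
  "iso Sym ar A B \<longleftrightarrow> (\<exists>h. bij_betw h (carrier A) (carrier B) \<and>
     (\<forall>f\<in>Sym. \<forall>as. length as = ar f \<and> set as \<subseteq> carrier A \<longrightarrow>
        h (ops A f as) = ops B f (map h as)))"

definition unary_term :: "('f \<Rightarrow> nat) \<Rightarrow> 'f trm \<Rightarrow> bool" where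
  "unary_term ar e \<longleftrightarrow> wf_trm ar e \<and> vars e \<subseteq> {0}"

definition app1 :: "('f, 'a) algebra \<Rightarrow> 'f trm \<Rightarrow> 'a \<Rightarrow> 'a" where
  "app1 A e x = eval A (\<lambda>_. x) e"

definition idempotent :: "('f, 'a) algebra \<Rightarrow> 'f trm \<Rightarrow> bool" where
  "idempotent A e \<longleftrightarrow> (\<forall>x\<in>carrier A. app1 A e (app1 A e x) = app1 A e x)"

definition separates :: "('f \<Rightarrow> nat) \<Rightarrow> ('f, 'a) algebra \<Rightarrow> 'f trm \<Rightarrow> bool" where
  "separates ar A e \<longleftrightarrow> (\<forall>a\<in>carrier A. \<forall>b\<in>carrier A. a \<noteq> b \<longrightarrow>
     (\<exists>g. unary_term ar g \<and> app1 A e (app1 A g a) \<noteq> app1 A e (app1 A g b)))"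

inductive_set generated :: "'f set \<Rightarrow> ('f \<Rightarrow> nat) \<Rightarrow> ('f, 'a) algebra \<Rightarrow> 'a set \<Rightarrow> 'a set"
  for Sym ar A X where
  gen_base: "x \<in> X \<Longrightarrow> x \<in> generated Sym ar A X"
| gen_op: "f \<in> Sym \<Longrightarrow> length as = ar f \<Longrightarrow> \<forall>a\<in>set as. a \<in> generated Sym ar A X
            \<Longrightarrow> ops A f as \<in> generated Sym ar A X"

definition dense :: "('f \<Rightarrow> nat) \<Rightarrow> ('f, 'a) algebra \<Rightarrow> 'f trm \<Rightarrow> bool" where
  "dense ar A e \<longleftrightarrow> generated UNIV ar A (app1 A e ` carrier A) = carrier A"

text \<open>Localization e(A): symbols are pairs (t, n) with t a term in variables x_0..x_(n-1),
  of arity n, interpreted as the restriction to e(A) of e(t(x_0,...,x_(n-1))).\<close>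
definition loc_sym :: "('f \<Rightarrow> nat) \<Rightarrow> ('f trm \<times> nat) set" where
  "loc_sym ar = {(t, n). wf_trm ar t \<and> vars t \<subseteq> {..<n}}"

definition loc_ar :: "'f trm \<times> nat \<Rightarrow> nat" where
  "loc_ar s = snd s"

definition localization :: "('f, 'a) algebra \<Rightarrow> 'f trm \<Rightarrow> ('f trm \<times> nat, 'a) algebra" where
  "localization A e = \<lparr> carrier = app1 A e ` carrier A,
     ops = (\<lambda>(t, n) as. app1 A e (eval A (\<lambda>i. as ! i) t)) \<rparr>"

end

(* Homomorphisms commute with term operations, so an isomorphism A \<cong> B restricts to an
   isomorphism e(A) \<cong> e(B) of the localizations.
   Conversely, let k : e(A) \<cong> e(B). Since e(A) generates A, every element of A is t(a) for a
   term t and a tuple a from e(A), and we put h(t(a)) = t(k a). This is well defined because e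
   separates B: if t(k a) \<noteq> s(k a), some unary g gives e g t(k a) \<noteq> e g s(k a); but e g t and
   e g s are operations of the localization, so k carries e g t(a) = e g s(a) to these two
   values. Then h is a homomorphism extending k, and likewise h' extends k\<inverse>; the composites
   h' h and h h' fix the generating sets e(A) and e(B), hence are identities. *)

theory Submission
  imports Defs "HOL-Library.Nat_Bijection"
begin

fun subst :: "(nat \<Rightarrow> 'f trm) \<Rightarrow> 'f trm \<Rightarrow> 'f trm" where
  "subst \<sigma> (Var i) = \<sigma> i"
| "subst \<sigma> (App f ts) = App f (map (subst \<sigma>) ts)"

lemma eval_subst: "eval A env (subst \<sigma> t) = eval A (\<lambda>i. eval A env (\<sigma> i)) t"
  by (induction t) (auto intro!: arg_cong[where f = "ops A _"])

lemma wf_trm_subst: "wf_trm ar t \<Longrightarrow> \<forall>i. wf_trm ar (\<sigma> i) \<Longrightarrow> wf_trm ar (subst \<sigma> t)"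
  by (induction t) auto

lemma finite_vars: "finite (vars t)"
  by (induction t) auto

lemma eval_cong: "\<forall>i\<in>vars t. env i = env' i \<Longrightarrow> eval A env t = eval A env' t"
  by (induction t) (auto intro!: arg_cong[where f = "ops A _"])

lemma eval_in_carrier:
  assumes "is_algebra UNIV ar A"
  shows "wf_trm ar t \<Longrightarrow> \<forall>i\<in>vars t. env i \<in> carrier A \<Longrightarrow> eval A env t \<in> carrier A"
proof (induction t)
  case (App f ts)
  then have "set (map (eval A env) ts) \<subseteq> carrier A" by auto
  with App.prems show ?case using assms by (auto simp: is_algebra_def)
qed simp

lemma app1_image_subset_carrier:
  "is_algebra UNIV ar A \<Longrightarrow> unary_term ar e \<Longrightarrow> app1 A e ` carrier A \<subseteq> carrier A"
  unfolding app1_def unary_term_def by (auto intro: eval_in_carrier)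

lemma eval_subst_unary: "eval A env (subst (\<lambda>_. r) g) = app1 A g (eval A env r)"
  by (simp add: eval_subst app1_def)

text \<open>Countably many environments are packed into one along the pairing \<open>prod_encode\<close>;
  \<open>slot_trm j\<close> moves the variables of a term into the \<open>j\<close>-th slot.\<close>

definition merge_envs :: "(nat \<Rightarrow> nat \<Rightarrow> 'a) \<Rightarrow> nat \<Rightarrow> 'a" where
  "merge_envs envs n = (case prod_decode n of (j, i) \<Rightarrow> envs j i)"

definition slot_trm :: "nat \<Rightarrow> 'f trm \<Rightarrow> 'f trm" where
  "slot_trm j t = subst (\<lambda>i. Var (prod_encode (j, i))) t"

lemma eval_slot_trm: "eval A (merge_envs envs) (slot_trm j t) = eval A (envs j) t"
  by (simp add: slot_trm_def eval_subst merge_envs_def)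

lemma comp_merge_envs: "f \<circ> merge_envs envs = merge_envs (\<lambda>j. f \<circ> envs j)"
  by (auto simp: merge_envs_def split: prod.split)

lemma range_merge_envs: "\<forall>j. range (envs j) \<subseteq> X \<Longrightarrow> range (merge_envs envs) \<subseteq> X"
  by (simp add: merge_envs_def image_subset_iff split: prod.split)

lemma wf_trm_slot_trm: "wf_trm ar t \<Longrightarrow> wf_trm ar (slot_trm j t)"
  by (simp add: slot_trm_def wf_trm_subst)

lemma list_eval_common_env:
  assumes "X \<noteq> {}"
    and "\<forall>a\<in>set as. \<exists>t env. wf_trm ar t \<and> range env \<subseteq> X \<and> eval A env t = a"
  shows "\<exists>ts env. (\<forall>t\<in>set ts. wf_trm ar t) \<and> range env \<subseteq> X \<and> map (eval A env) ts = as"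
proof -
  obtain x0 where "x0 \<in> X" using assms(1) by blast
  have "\<exists>t env. wf_trm ar t \<and> range env \<subseteq> X \<and> (j < length as \<longrightarrow> eval A env t = as ! j)"
    for j
  proof (cases "j < length as")
    case True
    then have "as ! j \<in> set as" by simp
    then show ?thesis using assms(2) by fast
  next
    case False
    have "range (\<lambda>_. x0) \<subseteq> X" using \<open>x0 \<in> X\<close> by simp
    with False show ?thesis by (intro exI[of _ "Var 0"] exI[of _ "\<lambda>_. x0"]) simp
  qed
  then obtain t envs where t_wf: "\<And>j. wf_trm ar (t j)" and envs_X: "\<And>j. range (envs j) \<subseteq> X"
    and t_eval: "\<And>j. j < length as \<Longrightarrow> eval A (envs j) (t j) = as ! j"
    by metis
  define ts where "ts = map (\<lambda>j. slot_trm j (t j)) [0..<length as]"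
  have "map (eval A (merge_envs envs)) ts = map (\<lambda>j. as ! j) [0..<length as]"
    by (simp add: ts_def eval_slot_trm t_eval)
  also have "\<dots> = as" by (rule map_nth)
  finally have "map (eval A (merge_envs envs)) ts = as" .
  moreover have "\<forall>t\<in>set ts. wf_trm ar t" by (simp add: ts_def wf_trm_slot_trm t_wf)
  moreover have "range (merge_envs envs) \<subseteq> X" by (simp add: range_merge_envs envs_X)
  ultimately show ?thesis by blast
qed

text \<open>Environments are total, so \<open>X\<close> must be nonempty even for values of constants.\<close>

lemma generated_eval_trm:
  assumes "a \<in> generated Sym ar A X" and "X \<noteq> {}"
  shows "\<exists>t env. wf_trm ar t \<and> range env \<subseteq> X \<and> eval A env t = a"
  using assms(1)
proof (induction rule: generated.induct)
  case (gen_base x)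
  then show ?case by (intro exI[of _ "Var 0"] exI[of _ "\<lambda>_. x"]) auto
next
  case (gen_op f as)
  have "\<forall>a\<in>set as. \<exists>t env. wf_trm ar t \<and> range env \<subseteq> X \<and> eval A env t = a"
    using gen_op(3) by blast
  from list_eval_common_env[OF assms(2) this] obtain ts env
    where "\<forall>t\<in>set ts. wf_trm ar t" "range env \<subseteq> X" "map (eval A env) ts = as"
    by blast
  moreover from this(3) have "length ts = ar f" using gen_op(2) by auto
  ultimately show ?case by (intro exI[of _ "App f ts"] exI[of _ env]) simp
qed

definition hom ::
    "'f set \<Rightarrow> ('f \<Rightarrow> nat) \<Rightarrow> ('f, 'a) algebra \<Rightarrow> ('f, 'b) algebra \<Rightarrow> ('a \<Rightarrow> 'b) \<Rightarrow> bool"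
  where "hom Sym ar A B h \<longleftrightarrow> h ` carrier A \<subseteq> carrier B \<and>
     (\<forall>f\<in>Sym. \<forall>as. length as = ar f \<and> set as \<subseteq> carrier A \<longrightarrow>
        h (ops A f as) = ops B f (map h as))"

lemma hom_id: "hom Sym ar A A id"
  by (simp add: hom_def)

lemma hom_comp:
  assumes h: "hom Sym ar A B h" and g: "hom Sym ar B C g"
  shows "hom Sym ar A C (g \<circ> h)"
  unfolding hom_def
proof (intro conjI ballI allI impI)
  show "(g \<circ> h) ` carrier A \<subseteq> carrier C"
    using h g by (auto simp: hom_def image_subset_iff)
  fix f as assume "f \<in> Sym" and as: "length as = ar f \<and> set as \<subseteq> carrier A"
  moreover from as have "set (map h as) \<subseteq> carrier B" using h by (auto simp: hom_def)
  ultimately show "(g \<circ> h) (ops A f as) = ops C f (map (g \<circ> h) as)"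
    using h g by (simp add: hom_def)
qed

lemma hom_eval:
  assumes "hom UNIV ar A B h" and "is_algebra UNIV ar A"
  shows "wf_trm ar t \<Longrightarrow> \<forall>i\<in>vars t. env i \<in> carrier A
           \<Longrightarrow> h (eval A env t) = eval B (h \<circ> env) t"
proof (induction t)
  case (App f ts)
  have "set (map (eval A env) ts) \<subseteq> carrier A" using App.prems eval_in_carrier[OF assms(2)] by auto
  then have "h (eval A env (App f ts)) = ops B f (map h (map (eval A env) ts))"
    using assms(1) App.prems by (auto simp: hom_def)
  also have "\<dots> = eval B (h \<circ> env) (App f ts)"
    using App by (auto simp: comp_def intro!: arg_cong[where f = "ops B _"])
  finally show ?case .
qed simp

lemma hom_app1:
  "hom UNIV ar A B h \<Longrightarrow> is_algebra UNIV ar A \<Longrightarrow> unary_term ar e \<Longrightarrow> x \<in> carrier A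
   \<Longrightarrow> h (app1 A e x) = app1 B e (h x)"
  using hom_eval[of ar A B h e "\<lambda>_. x"] by (simp add: app1_def unary_term_def comp_def)

lemma iso_iff_inverse_homs:
  assumes "is_algebra Sym ar A"
  shows "iso Sym ar A B \<longleftrightarrow> (\<exists>h h'. hom Sym ar A B h \<and> hom Sym ar B A h' \<and>
           (\<forall>a\<in>carrier A. h' (h a) = a) \<and> (\<forall>b\<in>carrier B. h (h' b) = b))"
proof
  assume "iso Sym ar A B"
  then obtain h where bij: "bij_betw h (carrier A) (carrier B)"
    and h_ops: "\<And>f as. f \<in> Sym \<Longrightarrow> length as = ar f \<Longrightarrow> set as \<subseteq> carrier A
                 \<Longrightarrow> h (ops A f as) = ops B f (map h as)"
    unfolding iso_def by blast
  define h' where "h' = inv_into (carrier A) h"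
  have left: "\<forall>a\<in>carrier A. h' (h a) = a" and right: "\<forall>b\<in>carrier B. h (h' b) = b"
    using bij by (simp_all add: h'_def bij_betw_inv_into_left bij_betw_inv_into_right)
  have h'_into: "h' ` carrier B \<subseteq> carrier A"
    using bij_betw_inv_into[OF bij] by (simp add: h'_def bij_betw_def)
  have "h' (ops B f bs) = ops A f (map h' bs)"
    if f: "f \<in> Sym" and bs: "length bs = ar f" "set bs \<subseteq> carrier B" for f bs
  proof -
    have h'_bs: "set (map h' bs) \<subseteq> carrier A" using h'_into bs(2) by auto
    have "map h (map h' bs) = bs" using right bs(2) by (induction bs) auto
    then have "ops B f bs = h (ops A f (map h' bs))" using h_ops[OF f _ h'_bs] bs(1) by simp
    moreover have "ops A f (map h' bs) \<in> carrier A"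
      using assms f bs(1) h'_bs by (simp add: is_algebra_def)
    ultimately show ?thesis using left by simp
  qed
  then have "hom Sym ar B A h'" using h'_into by (simp add: hom_def)
  moreover have "hom Sym ar A B h" using bij h_ops by (simp add: hom_def bij_betw_def)
  ultimately show "\<exists>h h'. hom Sym ar A B h \<and> hom Sym ar B A h' \<and>
           (\<forall>a\<in>carrier A. h' (h a) = a) \<and> (\<forall>b\<in>carrier B. h (h' b) = b)"
    using left right by blast
next
  assume "\<exists>h h'. hom Sym ar A B h \<and> hom Sym ar B A h' \<and>
           (\<forall>a\<in>carrier A. h' (h a) = a) \<and> (\<forall>b\<in>carrier B. h (h' b) = b)"
  then obtain h h' where "hom Sym ar A B h" "hom Sym ar B A h'"
    "\<forall>a\<in>carrier A. h' (h a) = a" "\<forall>b\<in>carrier B. h (h' b) = b"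
    by blast
  then have "bij_betw h (carrier A) (carrier B)"
    by (intro bij_betw_byWitness) (auto simp: hom_def)
  with \<open>hom Sym ar A B h\<close> show "iso Sym ar A B"
    unfolding iso_def hom_def by blast
qed

lemma generated_subset_carrier:
  assumes "is_algebra Sym ar A" and "X \<subseteq> carrier A"
  shows "generated Sym ar A X \<subseteq> carrier A"
proof
  fix a assume "a \<in> generated Sym ar A X"
  then show "a \<in> carrier A"
  proof induction
    case (gen_op f as)
    then have "set as \<subseteq> carrier A" by blast
    with assms(1) gen_op(1,2) show ?case by (simp add: is_algebra_def)
  qed (use assms(2) in blast)
qed

lemma homs_agree_on_generated:
  assumes "is_algebra Sym ar A" and "X \<subseteq> carrier A"
    and "hom Sym ar A B h" and "hom Sym ar A B g" and "\<forall>x\<in>X. h x = g x"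
  shows "\<forall>a\<in>generated Sym ar A X. h a = g a"
proof
  fix a assume "a \<in> generated Sym ar A X"
  then show "h a = g a"
  proof induction
    case (gen_op f as)
    then have as_A: "set as \<subseteq> carrier A"
      using generated_subset_carrier[OF assms(1,2)] by blast
    have "h (ops A f as) = ops B f (map h as)"
      using assms(3) gen_op(1,2) as_A by (simp add: hom_def)
    also have "map h as = map g as" using gen_op(3) by simp
    also have "ops B f (map g as) = g (ops A f as)"
      using assms(4) gen_op(1,2) as_A by (simp add: hom_def)
    finally show ?case .
  qed (use assms(5) in simp)
qed

lemma carrier_localization [simp]: "carrier (localization A e) = app1 A e ` carrier A"
  by (simp add: localization_def)

lemma ops_localization [simp]: "ops (localization A e) (t, n) as = app1 A e (eval A (\<lambda>i. as ! i) t)"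
  by (simp add: localization_def)

lemma localization_args_in_carrier:
  assumes "is_algebra UNIV ar A" and "unary_term ar e"
    and "(t, n) \<in> loc_sym ar" and "length as = n" and "set as \<subseteq> app1 A e ` carrier A"
  shows "\<forall>i\<in>vars t. as ! i \<in> carrier A"
proof
  fix i assume "i \<in> vars t"
  then have "as ! i \<in> set as" using assms(3,4) by (auto simp: loc_sym_def)
  then show "as ! i \<in> carrier A" using assms(5) app1_image_subset_carrier[OF assms(1,2)] by blast
qed

lemma is_algebra_localization:
  assumes "is_algebra UNIV ar A" and "unary_term ar e"
  shows "is_algebra (loc_sym ar) loc_ar (localization A e)"
  unfolding is_algebra_def
proof (intro ballI allI impI)
  fix s as assume s: "s \<in> loc_sym ar"
    and as: "length as = loc_ar s \<and> set as \<subseteq> carrier (localization A e)"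
  obtain t n where s_eq: "s = (t, n)" by (cases s)
  have "eval A (\<lambda>i. as ! i) t \<in> carrier A"
    using s as localization_args_in_carrier[OF assms, of t n as]
    by (intro eval_in_carrier[OF assms(1)]) (auto simp: s_eq loc_sym_def loc_ar_def)
  then show "ops (localization A e) s as \<in> carrier (localization A e)"
    by (simp add: s_eq)
qed

lemma hom_localization:
  assumes h: "hom UNIV ar A B h" and A: "is_algebra UNIV ar A" and e: "unary_term ar e"
  shows "hom (loc_sym ar) loc_ar (localization A e) (localization B e) h"
  unfolding hom_def
proof (intro conjI ballI allI impI)
  show "h ` carrier (localization A e) \<subseteq> carrier (localization B e)"
    using hom_app1[OF h A e] h by (auto simp: hom_def)
  fix s as assume s: "s \<in> loc_sym ar"
    and as: "length as = loc_ar s \<and> set as \<subseteq> carrier (localization A e)"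
  obtain t n where s_eq: "s = (t, n)" by (cases s)
  have t: "wf_trm ar t" "vars t \<subseteq> {..<length as}"
    using s as by (auto simp: s_eq loc_sym_def loc_ar_def)
  have args: "\<forall>i\<in>vars t. as ! i \<in> carrier A"
    using s as localization_args_in_carrier[OF A e, of t n as] by (simp add: s_eq loc_ar_def)
  have "h (eval A (\<lambda>i. as ! i) t) = eval B (h \<circ> (\<lambda>i. as ! i)) t"
    by (rule hom_eval[OF h A t(1) args])
  also have "\<dots> = eval B (\<lambda>i. map h as ! i) t"
    using t(2) by (intro eval_cong) auto
  finally show "h (ops (localization A e) s as) = ops (localization B e) s (map h as)"
    using eval_in_carrier[OF A t(1) args] by (simp add: s_eq hom_app1[OF h A e])
qed

lemma localization_hom_eval:
  assumes k: "hom (loc_sym ar) loc_ar (localization A e) (localization B e) k"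
    and u: "wf_trm ar u" and env: "range env \<subseteq> app1 A e ` carrier A"
  shows "k (app1 A e (eval A env u)) = app1 B e (eval B (k \<circ> env) u)"
proof -
  obtain n where n: "vars u \<subseteq> {..<n}"
    using finite_vars[of u] by (auto simp: finite_nat_set_iff_bounded)
  define as where "as = map env [0..<n]"
  have "(u, n) \<in> loc_sym ar" using u n by (simp add: loc_sym_def)
  moreover have "length as = loc_ar (u, n)" "set as \<subseteq> carrier (localization A e)"
    using env by (auto simp: as_def loc_ar_def)
  ultimately have "k (ops (localization A e) (u, n) as) = ops (localization B e) (u, n) (map k as)"
    using k unfolding hom_def by blast
  moreover have "eval A (\<lambda>i. as ! i) u = eval A env u"
    using n by (intro eval_cong) (auto simp: as_def)
  moreover have "eval B (\<lambda>i. map k as ! i) u = eval B (k \<circ> env) u"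
    using n by (intro eval_cong) (auto simp: as_def)
  ultimately show ?thesis by simp
qed

lemma localization_hom_range:
  assumes "hom (loc_sym ar) loc_ar (localization A e) (localization B e) k"
    and "range env \<subseteq> app1 A e ` carrier A"
  shows "range (k \<circ> env) \<subseteq> app1 B e ` carrier B"
proof -
  have "range (k \<circ> env) \<subseteq> k ` app1 A e ` carrier A"
    using assms(2) by (metis image_comp image_mono)
  also have "\<dots> \<subseteq> app1 B e ` carrier B"
    using assms(1) by (simp add: hom_def)
  finally show ?thesis .
qed

lemma localization_hom_preserves_eq_common_env:
  assumes B: "is_algebra UNIV ar B" and e: "unary_term ar e" and sep: "separates ar B e"
    and k: "hom (loc_sym ar) loc_ar (localization A e) (localization B e) k"
    and t: "wf_trm ar t" and s: "wf_trm ar s" and env: "range env \<subseteq> app1 A e ` carrier A"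
    and eq: "eval A env t = eval A env s"
  shows "eval B (k \<circ> env) t = eval B (k \<circ> env) s"
proof (rule ccontr)
  let ?tB = "eval B (k \<circ> env) t" and ?sB = "eval B (k \<circ> env) s"
  assume "?tB \<noteq> ?sB"
  have "range (k \<circ> env) \<subseteq> carrier B"
    using localization_hom_range[OF k env] app1_image_subset_carrier[OF B e] by blast
  then have "?tB \<in> carrier B" "?sB \<in> carrier B"
    by (auto intro!: eval_in_carrier[OF B] t s)
  with \<open>?tB \<noteq> ?sB\<close> obtain g where g: "unary_term ar g"
    and g_sep: "app1 B e (app1 B g ?tB) \<noteq> app1 B e (app1 B g ?sB)"
    using sep unfolding separates_def by blast
  have wf: "wf_trm ar (subst (\<lambda>_. t) g)" "wf_trm ar (subst (\<lambda>_. s) g)"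
    using g t s by (simp_all add: unary_term_def wf_trm_subst)
  have "app1 A e (eval A env (subst (\<lambda>_. t) g)) = app1 A e (eval A env (subst (\<lambda>_. s) g))"
    using eq by (simp add: eval_subst_unary)
  then have "app1 B e (eval B (k \<circ> env) (subst (\<lambda>_. t) g)) =
             app1 B e (eval B (k \<circ> env) (subst (\<lambda>_. s) g))"
    using localization_hom_eval[OF k wf(1) env] localization_hom_eval[OF k wf(2) env] by simp
  with g_sep show False by (simp add: eval_subst_unary)
qed

lemma localization_hom_preserves_eq:
  assumes B: "is_algebra UNIV ar B" and e: "unary_term ar e" and sep: "separates ar B e"
    and k: "hom (loc_sym ar) loc_ar (localization A e) (localization B e) k"
    and t: "wf_trm ar t" and s: "wf_trm ar s"
    and env1: "range env1 \<subseteq> app1 A e ` carrier A" and env2: "range env2 \<subseteq> app1 A e ` carrier A"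
    and eq: "eval A env1 t = eval A env2 s"
  shows "eval B (k \<circ> env1) t = eval B (k \<circ> env2) s"
proof -
  define envs where "envs = (\<lambda>j::nat. if j = 0 then env1 else env2)"
  have "range (merge_envs envs) \<subseteq> app1 A e ` carrier A"
    using env1 env2 by (intro range_merge_envs) (simp add: envs_def)
  moreover have "eval A (merge_envs envs) (slot_trm 0 t) = eval A (merge_envs envs) (slot_trm 1 s)"
    using eq by (simp add: eval_slot_trm envs_def)
  ultimately have "eval B (k \<circ> merge_envs envs) (slot_trm 0 t) =
                   eval B (k \<circ> merge_envs envs) (slot_trm 1 s)"
    by (intro localization_hom_preserves_eq_common_env[OF B e sep k] wf_trm_slot_trm t s)
  then show ?thesis by (simp add: comp_merge_envs eval_slot_trm envs_def)
qed

lemma hom_from_empty: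
  assumes "is_algebra Sym ar A" and "carrier A = {}"
  shows "hom Sym ar A B h"
  unfolding hom_def
proof (intro conjI ballI allI impI)
  fix f as assume "f \<in> Sym" and "length as = ar f \<and> set as \<subseteq> carrier A"
  then have "ops A f as \<in> carrier A" using assms(1) by (simp add: is_algebra_def)
  with assms(2) show "h (ops A f as) = ops B f (map h as)" by simp
qed (use assms(2) in simp)

definition loc_extend ::
    "('f \<Rightarrow> nat) \<Rightarrow> ('f, 'a) algebra \<Rightarrow> ('f, 'b) algebra \<Rightarrow> 'f trm \<Rightarrow> ('a \<Rightarrow> 'b) \<Rightarrow> 'a \<Rightarrow> 'b"
  where "loc_extend ar A B e k a =
    (SOME b. \<exists>t env. wf_trm ar t \<and> range env \<subseteq> app1 A e ` carrier A \<and>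
                      eval A env t = a \<and> eval B (k \<circ> env) t = b)"

lemma loc_extend_eval:
  assumes B: "is_algebra UNIV ar B" and e: "unary_term ar e" and sep: "separates ar B e"
    and k: "hom (loc_sym ar) loc_ar (localization A e) (localization B e) k"
    and t: "wf_trm ar t" and env: "range env \<subseteq> app1 A e ` carrier A"
  shows "loc_extend ar A B e k (eval A env t) = eval B (k \<circ> env) t"
proof -
  let ?R = "\<lambda>b. \<exists>t' env'. wf_trm ar t' \<and> range env' \<subseteq> app1 A e ` carrier A \<and>
                          eval A env' t' = eval A env t \<and> eval B (k \<circ> env') t' = b"
  have "?R (eval B (k \<circ> env) t)" using t env by blast
  then have "?R (loc_extend ar A B e k (eval A env t))"
    unfolding loc_extend_def by (rule someI)
  then obtain t' env' where "wf_trm ar t'" "range env' \<subseteq> app1 A e ` carrier A"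
    and "eval A env' t' = eval A env t"
    and "eval B (k \<circ> env') t' = loc_extend ar A B e k (eval A env t)"
    by blast
  with localization_hom_preserves_eq[OF B e sep k _ t _ env] show ?thesis by metis
qed

lemma loc_extend_eq:
  assumes "is_algebra UNIV ar B" and "unary_term ar e" and "separates ar B e"
    and "hom (loc_sym ar) loc_ar (localization A e) (localization B e) k"
    and "x \<in> app1 A e ` carrier A"
  shows "loc_extend ar A B e k x = k x"
  using loc_extend_eval[OF assms(1-4), of "Var 0" "\<lambda>_. x"] assms(5) by simp

lemma hom_loc_extend:
  assumes A: "is_algebra UNIV ar A" and B: "is_algebra UNIV ar B" and e: "unary_term ar e"
    and sep: "separates ar B e" and dense: "dense ar A e"
    and k: "hom (loc_sym ar) loc_ar (localization A e) (localization B e) k"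
  shows "hom UNIV ar A B (loc_extend ar A B e k)"
proof (cases "carrier A = {}")
  case True
  then show ?thesis by (rule hom_from_empty[OF A])
next
  case False
  define EA where "EA = app1 A e ` carrier A"
  have EA_ne: "EA \<noteq> {}" using False by (simp add: EA_def)
  let ?h = "loc_extend ar A B e k"
  have h: "?h (eval A env t) = eval B (k \<circ> env) t" if "wf_trm ar t" "range env \<subseteq> EA" for t env
    using loc_extend_eval[OF B e sep k] that by (simp add: EA_def)
  have rep: "\<exists>t env. wf_trm ar t \<and> range env \<subseteq> EA \<and> eval A env t = a" if "a \<in> carrier A" for a
  proof -
    have "a \<in> generated UNIV ar A EA" using that dense by (simp add: dense_def EA_def)
    then show ?thesis by (rule generated_eval_trm[OF _ EA_ne])
  qed
  have "?h a \<in> carrier B" if a: "a \<in> carrier A" for a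
  proof -
    obtain t env where t: "wf_trm ar t" "range env \<subseteq> EA" "eval A env t = a"
      using rep[OF a] by blast
    have "range (k \<circ> env) \<subseteq> carrier B"
      using localization_hom_range[OF k] app1_image_subset_carrier[OF B e] t(2)
      unfolding EA_def by blast
    then have "eval B (k \<circ> env) t \<in> carrier B" by (auto intro!: eval_in_carrier[OF B] t(1))
    then show ?thesis using h[OF t(1,2)] t(3) by simp
  qed
  moreover have "?h (ops A f as) = ops B f (map ?h as)"
    if "length as = ar f" "set as \<subseteq> carrier A" for f as
  proof -
    have "\<forall>a\<in>set as. \<exists>t env. wf_trm ar t \<and> range env \<subseteq> EA \<and> eval A env t = a"
      using that(2) rep by blast
    from list_eval_common_env[OF EA_ne this] obtain ts env
      where ts: "\<forall>t\<in>set ts. wf_trm ar t" "range env \<subseteq> EA" "map (eval A env) ts = as"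
      by blast
    have wf: "wf_trm ar (App f ts)" using ts(1,3) that(1) by auto
    have "map ?h as = map (\<lambda>t. ?h (eval A env t)) ts" using ts(3) by auto
    also have "\<dots> = map (eval B (k \<circ> env)) ts" using ts(1,2) h by simp
    finally have map_h: "map ?h as = map (eval B (k \<circ> env)) ts" .
    have "?h (ops A f as) = ?h (eval A env (App f ts))" using ts(3) by simp
    also have "\<dots> = eval B (k \<circ> env) (App f ts)" by (rule h[OF wf ts(2)])
    also have "\<dots> = ops B f (map ?h as)" by (simp add: map_h)
    finally show ?thesis .
  qed
  ultimately show ?thesis by (simp add: hom_def image_subset_iff)
qed

lemma inverse_on_carrier_if_dense:
  assumes A: "is_algebra UNIV ar A" and e: "unary_term ar e" and dense: "dense ar A e"
    and h: "hom UNIV ar A B h" and h': "hom UNIV ar B A h'"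
    and inv: "\<forall>x\<in>app1 A e ` carrier A. h' (h x) = x"
  shows "\<forall>a\<in>carrier A. h' (h a) = a"
proof -
  have "\<forall>a\<in>generated UNIV ar A (app1 A e ` carrier A). (h' \<circ> h) a = id a"
    using inv
    by (intro homs_agree_on_generated[OF A app1_image_subset_carrier[OF A e] hom_comp[OF h h'] hom_id])
      simp
  then show ?thesis using dense by (simp add: dense_def)
qed

lemma iso_localization:
  assumes A: "is_algebra UNIV ar A" and B: "is_algebra UNIV ar B" and e: "unary_term ar e"
    and "iso UNIV ar A B"
  shows "iso (loc_sym ar) loc_ar (localization A e) (localization B e)"
proof -
  obtain h h' where h: "hom UNIV ar A B h" and h': "hom UNIV ar B A h'"
    and inv: "\<forall>a\<in>carrier A. h' (h a) = a" "\<forall>b\<in>carrier B. h (h' b) = b"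
    using assms(4) unfolding iso_iff_inverse_homs[OF A] by blast
  have "hom (loc_sym ar) loc_ar (localization A e) (localization B e) h"
    and "hom (loc_sym ar) loc_ar (localization B e) (localization A e) h'"
    using hom_localization[OF h A e] hom_localization[OF h' B e] by simp_all
  moreover have "\<forall>a\<in>carrier (localization A e). h' (h a) = a"
    and "\<forall>b\<in>carrier (localization B e). h (h' b) = b"
    using inv app1_image_subset_carrier[OF A e] app1_image_subset_carrier[OF B e] by auto
  ultimately show ?thesis
    unfolding iso_iff_inverse_homs[OF is_algebra_localization[OF A e]] by blast
qed

lemma iso_of_iso_localization:
  assumes A: "is_algebra UNIV ar A" and B: "is_algebra UNIV ar B" and e: "unary_term ar e"
    and sepA: "separates ar A e" and sepB: "separates ar B e"
    and denseA: "dense ar A e" and denseB: "dense ar B e"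
    and "iso (loc_sym ar) loc_ar (localization A e) (localization B e)"
  shows "iso UNIV ar A B"
proof -
  obtain k k' where k: "hom (loc_sym ar) loc_ar (localization A e) (localization B e) k"
    and k': "hom (loc_sym ar) loc_ar (localization B e) (localization A e) k'"
    and kk': "\<forall>x\<in>carrier (localization A e). k' (k x) = x"
    and k'k: "\<forall>y\<in>carrier (localization B e). k (k' y) = y"
    using assms(8) unfolding iso_iff_inverse_homs[OF is_algebra_localization[OF A e]] by blast
  define h where "h = loc_extend ar A B e k"
  define h' where "h' = loc_extend ar B A e k'"
  have h: "hom UNIV ar A B h" and h_k: "\<forall>x\<in>app1 A e ` carrier A. h x = k x"
    unfolding h_def using hom_loc_extend[OF A B e sepB denseA k] loc_extend_eq[OF B e sepB k]
    by blast+
  have h': "hom UNIV ar B A h'" and h'_k': "\<forall>y\<in>app1 B e ` carrier B. h' y = k' y"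
    unfolding h'_def using hom_loc_extend[OF B A e sepA denseB k'] loc_extend_eq[OF A e sepA k']
    by blast+
  have "\<forall>x\<in>app1 A e ` carrier A. h' (h x) = x"
  proof
    fix x assume x: "x \<in> app1 A e ` carrier A"
    then have "k x \<in> app1 B e ` carrier B" using k unfolding hom_def by auto
    then show "h' (h x) = x"
      using bspec[OF h_k x] bspec[OF h'_k' \<open>k x \<in> _\<close>] bspec[OF kk'[unfolded carrier_localization] x]
      by simp
  qed
  moreover have "\<forall>y\<in>app1 B e ` carrier B. h (h' y) = y"
  proof
    fix y assume y: "y \<in> app1 B e ` carrier B"
    then have "k' y \<in> app1 A e ` carrier A" using k' unfolding hom_def by auto
    then show "h (h' y) = y"
      using bspec[OF h'_k' y] bspec[OF h_k \<open>k' y \<in> _\<close>] bspec[OF k'k[unfolded carrier_localization] y]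
      by simp
  qed
  ultimately show ?thesis
    using h h' inverse_on_carrier_if_dense[OF A e denseA h h']
      inverse_on_carrier_if_dense[OF B e denseB h' h]
    unfolding iso_iff_inverse_homs[OF A] by blast
qed

theorem corollary2p4:
  fixes ar :: "'f \<Rightarrow> nat"
    and A :: "('f, 'a) algebra" and B :: "('f, 'b) algebra" and e :: "'f trm"
  assumes "is_algebra UNIV ar A" and "is_algebra UNIV ar B"
    and "unary_term ar e"
    and "idempotent A e" and "idempotent B e"
    and "separates ar A e" and "separates ar B e"
    and "dense ar A e" and "dense ar B e"
  shows "iso UNIV ar A B \<longleftrightarrow>
         iso (loc_sym ar) loc_ar (localization A e) (localization B e)"
  using iso_localization[OF assms(1-3)] iso_of_iso_localization[OF assms(1-3,6-9)] by blast

end
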